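(* Let $G=(G'_\ell,A'_\ell,B'_\ell)\circ(G'_{\ell-1},A'_{\ell-1},B'_{\ell-1})\circ\cdots\circ(G'_1,A'_1,B'_1)\circ G'_0$ be the compact canonical decomposition of a graph $G$. Then every automorphism $\pi$ of $G$ satisfies $\pi(V(G'_i))=V(G'_i)$ for every $i=0,\dots,\ell$, and the map $\pi\mapsto(\pi|_{V(G'_\ell)},\dots,\pi|_{V(G'_0)})$ is a group isomorphism $$\mathrm{Aut}(G)\cong\mathrm{Aut}(G'_\ell)\times\mathrm{Aut}(G'_{\ell-1})\times\cdots\times\mathrm{Aut}(G'_1)\times\mathrm{Aut}(G'_0);$$ in particular, any choice of automorphisms $\pi_i\in\mathrm{Aut}(G'_i)$ combines into an automorphism of $G$.
   Context: All graphs are finite and simple; $\mathrm{Aut}(G)$ is the group of automorphisms (adjacency-preserving bijections $V(G)\to V(G)$). A graph is split if its vertex set can be partitioned into $A$ (inducing a complete graph) and $B$ (inducing an independent set), either possibly empty; $(A,B)$ is a $KS$-partition. For split $(G,A,B)$ with $V(G)\neq\emptyset$ and a graph $H$, $V(H)\neq\emptyset$, on disjoint vertices, $(G,A,B)\circ H$ is the graph on $V(G)\cup V(H)$ with edge set $E(G)\cup E(H)\cup\{uv:u\in A,v\in V(H)\}$; this is associative and iterated compositions are read right-nested. A graph is indecomposable if it is not isomorphic to any such composition. Canonical decomposition (Tyshkevich): every graph is $G=(G_k,A_k,B_k)\circ\cdots\circ(G_1,A_1,B_1)\circ G_0$ with every $G_i$ indecomposable, unique up to componentwise isomorphism. A single-vertex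 component $(G_i,A_i,B_i)$, $i\ge1$, has type $K_1$ if $A_i=V(G_i)$ and type $S_1$ if $B_i=V(G_i)$; if $G_0$ and $G_1$ are both single-vertex graphs, $G_0$ is assigned the type of $G_1$. The compact canonical decomposition is obtained from the canonical decomposition by replacing each maximal run of consecutive single-vertex components of the same type by a single component: a run of $m$ components of type $K_1$ is replaced by the complete graph $K_m$ with $KS$-partition $(V(K_m),\emptyset)$, and a run of $m$ components of type $S_1$ by the edgeless graph on $m$ vertices with $KS$-partition $(\emptyset,\text{all vertices})$ (if the run contains $G_0$, the replacement becomes the new last component $G'_0$). It is unique up to isomorphism, and each component is an indecomposable graph with at least two vertices, a complete graph, or an edgeless graph. *)

theory Defs
  imports "HOL-Algebra.Product_Groups"
begin

type_synonym 'a graph = "'a set \<times> 'a set set"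

definition verts :: "'a graph \<Rightarrow> 'a set" where "verts G = fst G"
definition edges :: "'a graph \<Rightarrow> 'a set set" where "edges G = snd G"
definition adj :: "'a graph \<Rightarrow> 'a \<Rightarrow> 'a \<Rightarrow> bool" where "adj G u v \<longleftrightarrow> {u, v} \<in> edges G"

definition is_graph :: "'a graph \<Rightarrow> bool" where
  "is_graph G \<longleftrightarrow> finite (verts G) \<and>
     (\<forall>e\<in>edges G. \<exists>u v. e = {u, v} \<and> u \<noteq> v \<and> u \<in> verts G \<and> v \<in> verts G)"

definition complete_graph :: "'a set \<Rightarrow> 'a graph" where
  "complete_graph U = (U, {{u, v} | u v. u \<in> U \<and> v \<in> U \<and> u \<noteq> v})"

definition edgeless_graph :: "'a set \<Rightarrow> 'a graph" where
  "edgeless_graph U = (U, {})"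

text \<open>Automorphisms are represented as permutations of the vertex set that fix every
  non-vertex (so that they form a group under composition).\<close>
definition Aut :: "'a graph \<Rightarrow> ('a \<Rightarrow> 'a) set" where
  "Aut G = {\<pi>. bij_betw \<pi> (verts G) (verts G) \<and> (\<forall>x. x \<notin> verts G \<longrightarrow> \<pi> x = x) \<and>
              (\<forall>u\<in>verts G. \<forall>v\<in>verts G. adj G u v \<longleftrightarrow> adj G (\<pi> u) (\<pi> v))}"

definition Aut_group :: "'a graph \<Rightarrow> ('a \<Rightarrow> 'a) monoid" where
  "Aut_group G = \<lparr>carrier = Aut G, monoid.mult = (\<circ>), one = id\<rparr>"

definition perm_restrict :: "('a \<Rightarrow> 'a) \<Rightarrow> 'a set \<Rightarrow> ('a \<Rightarrow> 'a)" where
  "perm_restrict \<pi> S = (\<lambda>x. if x \<in> S then \<pi> x else x)"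

definition isomorphic :: "'a graph \<Rightarrow> 'b graph \<Rightarrow> bool" where
  "isomorphic G H \<longleftrightarrow> (\<exists>f. bij_betw f (verts G) (verts H) \<and>
      (\<forall>u\<in>verts G. \<forall>v\<in>verts G. adj G u v \<longleftrightarrow> adj H (f u) (f v)))"

definition KS_partition :: "'a graph \<Rightarrow> 'a set \<Rightarrow> 'a set \<Rightarrow> bool" where
  "KS_partition G A B \<longleftrightarrow> A \<union> B = verts G \<and> A \<inter> B = {} \<and>
     (\<forall>u\<in>A. \<forall>v\<in>A. u \<noteq> v \<longrightarrow> adj G u v) \<and> (\<forall>u\<in>B. \<forall>v\<in>B. \<not> adj G u v)"

definition comp_split :: "'a graph \<times> 'a set \<times> 'a set \<Rightarrow> 'a graph \<Rightarrow> 'a graph" where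
  "comp_split GAB H = (case GAB of (G, A, B) \<Rightarrow>
     (verts G \<union> verts H, edges G \<union> edges H \<union> {{u, v} | u v. u \<in> A \<and> v \<in> verts H}))"

definition valid_comp :: "'a graph \<Rightarrow> 'a set \<Rightarrow> 'a set \<Rightarrow> 'a graph \<Rightarrow> bool" where
  "valid_comp G A B H \<longleftrightarrow> is_graph G \<and> is_graph H \<and> KS_partition G A B \<and>
     verts G \<noteq> {} \<and> verts H \<noteq> {} \<and> verts G \<inter> verts H = {}"

definition indecomposable :: "'a graph \<Rightarrow> bool" where
  "indecomposable G \<longleftrightarrow>
     \<not> (\<exists>(G1 :: 'a graph) A B H. valid_comp G1 A B H \<and> isomorphic G (comp_split (G1, A, B) H))"

primrec compose :: "nat \<Rightarrow> (nat \<Rightarrow> 'a graph) \<Rightarrow> (nat \<Rightarrow> 'a set) \<Rightarrow> (nat \<Rightarrow> 'a set) \<Rightarrow> 'a graph" where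
  "compose 0 Gs As Bs = Gs 0"
| "compose (Suc i) Gs As Bs = comp_split (Gs (Suc i), As (Suc i), Bs (Suc i)) (compose i Gs As Bs)"

definition canonical_decomp ::
  "'a graph \<Rightarrow> nat \<Rightarrow> (nat \<Rightarrow> 'a graph) \<Rightarrow> (nat \<Rightarrow> 'a set) \<Rightarrow> (nat \<Rightarrow> 'a set) \<Rightarrow> bool" where
  "canonical_decomp G k Gs As Bs \<longleftrightarrow>
     G = compose k Gs As Bs \<and>
     (\<forall>i\<le>k. is_graph (Gs i) \<and> verts (Gs i) \<noteq> {} \<and> indecomposable (Gs i)) \<and>
     (\<forall>i\<in>{1..k}. KS_partition (Gs i) (As i) (Bs i)) \<and>
     (\<forall>i\<le>k. \<forall>j\<le>k. i \<noteq> j \<longrightarrow> verts (Gs i) \<inter> verts (Gs j) = {})"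

datatype sv_type = TK1 | TS1

definition comp_type ::
  "nat \<Rightarrow> (nat \<Rightarrow> 'a graph) \<Rightarrow> (nat \<Rightarrow> 'a set) \<Rightarrow> nat \<Rightarrow> sv_type option" where
  "comp_type k Gs As i =
     (if 1 \<le> i \<and> i \<le> k \<and> card (verts (Gs i)) = 1 then
        Some (if As i = verts (Gs i) then TK1 else TS1)
      else if i = 0 \<and> 1 \<le> k \<and> card (verts (Gs 0)) = 1 \<and> card (verts (Gs 1)) = 1 then
        Some (if As 1 = verts (Gs 1) then TK1 else TS1)
      else None)"

text \<open>The components (G'_j, A'_j, B'_j), j = 0..l, arise from the canonical decomposition
  (Gs i, As i, Bs i), i = 0..k, by replacing each maximal run of consecutive typed
  single-vertex components of the same type by one complete / edgeless component.
  The map f sends an old index to the index of the new component containing it.\<close>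
definition compact_of ::
  "nat \<Rightarrow> (nat \<Rightarrow> 'a graph) \<Rightarrow> (nat \<Rightarrow> 'a set) \<Rightarrow> (nat \<Rightarrow> 'a set) \<Rightarrow>
   nat \<Rightarrow> (nat \<Rightarrow> 'a graph) \<Rightarrow> (nat \<Rightarrow> 'a set) \<Rightarrow> (nat \<Rightarrow> 'a set) \<Rightarrow> bool" where
  "compact_of k Gs As Bs l G' A' B' \<longleftrightarrow>
    (\<exists>f :: nat \<Rightarrow> nat.
       f 0 = 0 \<and> mono_on {0..k} f \<and> f ` {0..k} = {0..l} \<and>
       (\<forall>i<k. f i = f (Suc i) \<longleftrightarrow>
                 (comp_type k Gs As i \<noteq> None \<and> comp_type k Gs As i = comp_type k Gs As (Suc i))) \<and>
       (\<forall>i\<le>k. comp_type k Gs As i = None \<longrightarrow>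
            G' (f i) = Gs i \<and> (1 \<le> f i \<longrightarrow> A' (f i) = As i \<and> B' (f i) = Bs i)) \<and>
       (\<forall>i\<le>k. let U = \<Union>{verts (Gs i') | i'. i' \<le> k \<and> f i' = f i} in
            (comp_type k Gs As i = Some TK1 \<longrightarrow>
               G' (f i) = complete_graph U \<and> (1 \<le> f i \<longrightarrow> A' (f i) = U \<and> B' (f i) = {})) \<and>
            (comp_type k Gs As i = Some TS1 \<longrightarrow>
               G' (f i) = edgeless_graph U \<and> (1 \<le> f i \<longrightarrow> A' (f i) = {} \<and> B' (f i) = U))))"

definition compact_canonical_decomp ::
  "'a graph \<Rightarrow> nat \<Rightarrow> (nat \<Rightarrow> 'a graph) \<Rightarrow> (nat \<Rightarrow> 'a set) \<Rightarrow> (nat \<Rightarrow> 'a set) \<Rightarrow> bool" where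
  "compact_canonical_decomp G l G' A' B' \<longleftrightarrow>
     (\<exists>k Gs As Bs. canonical_decomp G k Gs As Bs \<and> compact_of k Gs As Bs l G' A' B')"

end

(*
  Call j joined if the components G_j and G_(j+1) of the canonical decomposition
  G = G_k o ... o G_0 are single vertices of the same type; a block of the compact
  decomposition is the union of a maximal run G_i, ..., G_j with i, ..., j-1 joined.
  If j is not joined, the vertex set T_j of G_j o ... o G_0 is the bottom of a composition
  of G, and every other bottom Y of a composition is nested with T_j: otherwise some
  component G_i would itself decompose, or a vertex of T_j outside Y would be adjacent to all
  or to none of T_(j+1), which forces j to be joined.  An automorphism maps T_j to a bottom of
  the same size, so it fixes T_j, and therefore it fixes every block.

  Conversely, adjacency between two blocks only depends on whether the vertex in the higher
  block lies in its clique part A'_i, and every automorphism of a block preserves A'_i; for an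
  indecomposable block with at least two vertices this is the uniqueness of its KS-partition.
  So automorphisms of the blocks glue to an automorphism of G, and restriction to the blocks is
  an isomorphism onto the product group.
*)

theory Submission
  imports Defs "HOL-Library.Disjoint_Sets"
begin

section \<open>Splitting off the bottom of a composition\<close>

lemma adj_sym: "adj G u v = adj G v u"
  by (simp add: adj_def insert_commute)

lemma adj_irrefl: "is_graph G \<Longrightarrow> \<not> adj G u u"
  unfolding is_graph_def adj_def by (auto simp: doubleton_eq_iff)

lemma adj_imp_verts: "is_graph G \<Longrightarrow> adj G u v \<Longrightarrow> u \<in> verts G \<and> v \<in> verts G"
  unfolding is_graph_def adj_def by (fastforce simp: doubleton_eq_iff)

lemma Aut_adj: "\<pi> \<in> Aut G \<Longrightarrow> u \<in> verts G \<Longrightarrow> v \<in> verts G \<Longrightarrow> adj G (\<pi> u) (\<pi> v) = adj G u v"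
  by (simp add: Aut_def)

lemma Aut_bij: "\<pi> \<in> Aut G \<Longrightarrow> bij_betw \<pi> (verts G) (verts G)"
  by (simp add: Aut_def)

definition induced :: "'a graph \<Rightarrow> 'a set \<Rightarrow> 'a graph" where
  "induced G S = (S, {e \<in> edges G. e \<subseteq> S})"

lemma verts_induced [simp]: "verts (induced G S) = S"
  by (simp add: induced_def verts_def)

lemma adj_induced: "adj (induced G S) u v \<longleftrightarrow> adj G u v \<and> u \<in> S \<and> v \<in> S"
  by (simp add: induced_def adj_def edges_def)

lemma is_graph_induced: "is_graph G \<Longrightarrow> S \<subseteq> verts G \<Longrightarrow> is_graph (induced G S)"
  unfolding is_graph_def induced_def verts_def edges_def
  by (auto intro: finite_subset) (metis insert_subset)+

lemma verts_comp_split [simp]: "verts (comp_split (G, A, B) H) = verts G \<union> verts H"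
  by (simp add: comp_split_def verts_def)

lemma adj_comp_split:
  "adj (comp_split (G, A, B) H) u v \<longleftrightarrow>
     adj G u v \<or> adj H u v \<or> (u \<in> A \<and> v \<in> verts H) \<or> (v \<in> A \<and> u \<in> verts H)"
  by (auto simp: comp_split_def adj_def edges_def doubleton_eq_iff)

definition uniform_adj :: "'a graph \<Rightarrow> bool \<Rightarrow> 'a set \<Rightarrow> 'a set \<Rightarrow> bool" where
  "uniform_adj H c X Y \<longleftrightarrow> (\<forall>u\<in>X. \<forall>v\<in>Y. u \<noteq> v \<longrightarrow> adj H u v = c)"

lemma uniform_adjD: "uniform_adj H c X Y \<Longrightarrow> u \<in> X \<Longrightarrow> v \<in> Y \<Longrightarrow> u \<noteq> v \<Longrightarrow> adj H u v = c"
  unfolding uniform_adj_def by blast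

lemma uniform_adj_empty [simp]: "uniform_adj H c {} Y"
  by (simp add: uniform_adj_def)

lemma uniform_adj_mono:
  "uniform_adj H c X Y \<Longrightarrow> X' \<subseteq> X \<Longrightarrow> Y' \<subseteq> Y \<Longrightarrow> uniform_adj H c X' Y'"
  unfolding uniform_adj_def by blast

lemma uniform_adj_cong:
  "(\<And>u v. u \<in> X \<Longrightarrow> v \<in> Y \<Longrightarrow> adj H u v = adj H' u v) \<Longrightarrow>
   uniform_adj H c X Y = uniform_adj H' c X Y"
  unfolding uniform_adj_def by auto

lemma uniform_adj_Aut_image:
  assumes \<pi>: "\<pi> \<in> Aut H" and XY: "X \<subseteq> verts H" "Y \<subseteq> verts H"
  shows "uniform_adj H c (\<pi> ` X) (\<pi> ` Y) = uniform_adj H c X Y"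
proof -
  have inj: "inj_on \<pi> (verts H)"
    using Aut_bij[OF \<pi>] bij_betw_imp_inj_on by blast
  have neq: "(\<pi> u \<noteq> \<pi> v) = (u \<noteq> v)" if "u \<in> X" "v \<in> Y" for u v
    using that XY inj_on_eq_iff[OF inj] by (metis subsetD)
  have adj: "adj H (\<pi> u) (\<pi> v) = adj H u v" if "u \<in> X" "v \<in> Y" for u v
    using that XY Aut_adj[OF \<pi>] by (metis subsetD)
  have "uniform_adj H c (\<pi> ` X) (\<pi> ` Y) \<longleftrightarrow>
      (\<forall>u\<in>X. \<forall>v\<in>Y. \<pi> u \<noteq> \<pi> v \<longrightarrow> adj H (\<pi> u) (\<pi> v) = c)"
    unfolding uniform_adj_def by simp
  also have "\<dots> \<longleftrightarrow> uniform_adj H c X Y"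
    unfolding uniform_adj_def by (intro ball_cong refl) (simp add: neq adj)
  finally show ?thesis .
qed

lemma KS_partition_iff_uniform_adj:
  assumes "is_graph G"
  shows "KS_partition G A B \<longleftrightarrow> A \<union> B = verts G \<and> A \<inter> B = {} \<and>
    uniform_adj G True A A \<and> uniform_adj G False B B"
proof -
  have "(\<forall>u\<in>B. \<forall>v\<in>B. \<not> adj G u v) \<longleftrightarrow> (\<forall>u\<in>B. \<forall>v\<in>B. u \<noteq> v \<longrightarrow> adj G u v = False)"
    using adj_irrefl[OF assms] by metis
  then show ?thesis
    unfolding KS_partition_def uniform_adj_def by simp
qed

text \<open>\<open>decomposes_at H S Y\<close> says that the subgraph induced on \<open>S\<close> is a composition
  \<open>(H[S - Y], A, B) \<circ> H[Y]\<close>.\<close>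
definition decomposes_at :: "'a graph \<Rightarrow> 'a set \<Rightarrow> 'a set \<Rightarrow> bool" where
  "decomposes_at H S Y \<longleftrightarrow> Y \<subseteq> S \<and> S - Y \<noteq> {} \<and>
     (\<exists>A B. A \<union> B = S - Y \<and> A \<inter> B = {} \<and>
        uniform_adj H True A (A \<union> Y) \<and> uniform_adj H False B (B \<union> Y))"

lemma decomposes_atI:
  assumes "Y \<subseteq> S" "S - Y \<noteq> {}" "A \<union> B = S - Y" "A \<inter> B = {}"
    "uniform_adj H True A (A \<union> Y)" "uniform_adj H False B (B \<union> Y)"
  shows "decomposes_at H S Y"
  using assms unfolding decomposes_at_def by blast

lemma not_indecomposable_if_decomposes_at:
  assumes H: "is_graph H" and dec: "decomposes_at H (verts H) Y" and "Y \<noteq> {}"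
  shows "\<not> indecomposable H"
proof -
  obtain A B where Y: "Y \<subseteq> verts H" "verts H - Y \<noteq> {}"
    and AB: "A \<union> B = verts H - Y" "A \<inter> B = {}"
    and A: "uniform_adj H True A (A \<union> Y)" and B: "uniform_adj H False B (B \<union> Y)"
    using dec unfolding decomposes_at_def by blast
  define X where "X = verts H - Y"
  let ?G1 = "induced H X" and ?H2 = "induced H Y"
  have G1: "is_graph ?G1"
    using is_graph_induced[OF H] X_def by blast
  have induced_eq: "uniform_adj ?G1 c C C = uniform_adj H c C C" if "C \<subseteq> X" for c C
    using that by (intro uniform_adj_cong) (auto simp: adj_induced)
  have "KS_partition ?G1 A B"
    unfolding KS_partition_iff_uniform_adj[OF G1]
  proof (intro conjI)
    show "uniform_adj ?G1 True A A"
      using induced_eq[of A] uniform_adj_mono[OF A] AB X_def by auto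
    show "uniform_adj ?G1 False B B"
      using induced_eq[of B] uniform_adj_mono[OF B] AB X_def by auto
  qed (use AB X_def in auto)
  then have valid: "valid_comp ?G1 A B ?H2"
    unfolding valid_comp_def using H Y \<open>Y \<noteq> {}\<close> by (auto simp: X_def is_graph_induced)
  have across: "adj H u v \<longleftrightarrow> u \<in> A" if "u \<in> X" "v \<in> Y" for u v
  proof (cases "u \<in> A")
    case True
    then show ?thesis
      using A that AB(1) unfolding uniform_adj_def X_def by auto
  next
    case False
    then have "u \<in> B"
      using that AB(1) X_def by auto
    then show ?thesis
      using B that False unfolding uniform_adj_def X_def by auto
  qed
  have "adj H u v \<longleftrightarrow> adj (comp_split (?G1, A, B) ?H2) u v"
    if "u \<in> verts H" "v \<in> verts H" for u v
  proof -
    have "u \<in> X \<or> u \<in> Y" "v \<in> X \<or> v \<in> Y" "A \<subseteq> X" "X \<inter> Y = {}"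
      using that AB(1) X_def by auto
    then show ?thesis
      using across[of u v] across[of v u] adj_sym[of H u v]
      unfolding adj_comp_split by (auto simp: adj_induced)
  qed
  moreover have "verts (comp_split (?G1, A, B) ?H2) = verts H"
    using Y by (auto simp: X_def)
  ultimately have "isomorphic H (comp_split (?G1, A, B) ?H2)"
    unfolding isomorphic_def by (metis bij_betw_id id_apply)
  then show ?thesis
    using valid unfolding indecomposable_def by blast
qed

lemma decomposes_at_Aut_image:
  assumes \<pi>: "\<pi> \<in> Aut H" and dec: "decomposes_at H (verts H) Y"
  shows "decomposes_at H (verts H) (\<pi> ` Y)"
proof -
  obtain A B where Y: "Y \<subseteq> verts H" "verts H - Y \<noteq> {}"
    and AB: "A \<union> B = verts H - Y" "A \<inter> B = {}"
    and A: "uniform_adj H True A (A \<union> Y)" and B: "uniform_adj H False B (B \<union> Y)"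
    using dec unfolding decomposes_at_def by blast
  have inj: "inj_on \<pi> (verts H)" and im: "\<pi> ` verts H = verts H"
    using Aut_bij[OF \<pi>] by (simp_all add: bij_betw_def)
  have sub: "A \<subseteq> verts H" "B \<subseteq> verts H"
    using AB(1) by auto
  have compl: "verts H - \<pi> ` Y = \<pi> ` (verts H - Y)"
    by (simp add: inj_on_image_set_diff[OF inj Diff_subset Y(1)] im)
  show ?thesis
  proof (rule decomposes_atI)
    show "\<pi> ` Y \<subseteq> verts H"
      using image_mono[OF Y(1), of \<pi>] im by simp
    show "verts H - \<pi> ` Y \<noteq> {}"
      using Y(2) compl by simp
    show "\<pi> ` A \<union> \<pi> ` B = verts H - \<pi> ` Y"
      by (metis AB(1) compl image_Un)
    show "\<pi> ` A \<inter> \<pi> ` B = {}"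
      by (metis AB(2) image_empty inj_on_image_Int[OF inj sub])
    show "uniform_adj H True (\<pi> ` A) (\<pi> ` A \<union> \<pi> ` Y)"
      using A uniform_adj_Aut_image[OF \<pi> sub(1), of "A \<union> Y"] sub Y(1) by (simp add: image_Un)
    show "uniform_adj H False (\<pi> ` B) (\<pi> ` B \<union> \<pi> ` Y)"
      using B uniform_adj_Aut_image[OF \<pi> sub(2), of "B \<union> Y"] sub Y(1) by (simp add: image_Un)
  qed
qed

lemma indecomposable_uniform_vertex:
  assumes H: "is_graph H" "indecomposable H" and x: "x \<in> verts H"
    and uni: "uniform_adj H c {x} (verts H)"
  shows "verts H = {x}"
proof (rule ccontr)
  assume "verts H \<noteq> {x}"
  then have Y: "verts H - {x} \<noteq> {}"
    using x by auto
  have "decomposes_at H (verts H) (verts H - {x})"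
    by (rule decomposes_atI[where A = "if c then {x} else {}" and B = "if c then {} else {x}"])
      (use x uni in \<open>auto elim: uniform_adj_mono\<close>)
  then show False
    using not_indecomposable_if_decomposes_at[OF H(1)] H(2) Y by blast
qed

lemma indecomposable_uniform_graph:
  assumes H: "is_graph H" "indecomposable H" and "verts H \<noteq> {}"
    and uni: "uniform_adj H c (verts H) (verts H)"
  shows "\<exists>x. verts H = {x}"
proof -
  obtain x where x: "x \<in> verts H"
    using assms(3) by blast
  have "uniform_adj H c {x} (verts H)"
    by (rule uniform_adj_mono[OF uni]) (use x in auto)
  then show ?thesis
    using indecomposable_uniform_vertex[OF H x] by blast
qed

lemma no_KS_homogeneous_vertex:
  assumes H: "is_graph H" "indecomposable H" "card (verts H) \<noteq> 1" and KS: "KS_partition H A B"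
    and x: "x \<in> verts H" "\<And>u. u \<in> A - {x} \<Longrightarrow> adj H u x" "\<And>u. u \<in> B - {x} \<Longrightarrow> \<not> adj H u x"
  shows False
proof -
  have "verts H \<noteq> {x}"
    using H(3) by auto
  then have "decomposes_at H (verts H) {x}"
    using x KS unfolding KS_partition_def
    by (intro decomposes_atI[where A = "A - {x}" and B = "B - {x}"]) (auto simp: uniform_adj_def)
  then show False
    using not_indecomposable_if_decomposes_at[OF H(1)] H(2) by blast
qed

lemma KS_partition_subset:
  assumes H: "is_graph H" "indecomposable H" "card (verts H) \<noteq> 1"
    and KS: "KS_partition H A B" and KS': "KS_partition H A' B'"
  shows "A \<subseteq> A'"
proof
  have AB: "A \<union> B = verts H" "A \<inter> B = {}"
    and A: "\<And>u v. u \<in> A \<Longrightarrow> v \<in> A \<Longrightarrow> u \<noteq> v \<Longrightarrow> adj H u v"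
    and B: "\<And>u v. u \<in> B \<Longrightarrow> v \<in> B \<Longrightarrow> \<not> adj H u v"
    using KS unfolding KS_partition_def by auto
  have AB': "A' \<union> B' = verts H"
    and A': "\<And>u v. u \<in> A' \<Longrightarrow> v \<in> A' \<Longrightarrow> u \<noteq> v \<Longrightarrow> adj H u v"
    and B': "\<And>u v. u \<in> B' \<Longrightarrow> v \<in> B' \<Longrightarrow> \<not> adj H u v"
    using KS' unfolding KS_partition_def by auto
  note no_homogeneous = no_KS_homogeneous_vertex[OF H KS]
  fix a assume a: "a \<in> A"
  show "a \<in> A'"
  proof (rule ccontr)
    assume "a \<notin> A'"
    then have aB': "a \<in> B'"
      using a AB AB' by blast
    have "\<exists>b\<in>B. adj H b a"
      using no_homogeneous[of a] A[of _ a] a AB(1) by blast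
    then obtain b where b: "b \<in> B" "adj H b a" ..
    have bA': "b \<in> A'"
      using b(1) aB' B'[of a b] adj_sym[of H a b] b(2) AB(1) AB' by blast
    have "adj H a' b" if "a' \<in> A - {b}" for a'
    proof (cases "a' = a")
      case True
      then show ?thesis
        using b(2) adj_sym[of H a b] by simp
    next
      case False
      then have "a' \<in> A'"
        using A[of a' a] that a aB' B'[of a' a] AB(1) AB' by blast
      then show ?thesis
        using bA' A' that by blast
    qed
    then show False
      using no_homogeneous[of b] B[of _ b] b(1) AB(1) by blast
  qed
qed

lemma KS_partition_Aut_image:
  assumes H: "is_graph H" and KS: "KS_partition H A B" and \<sigma>: "\<sigma> \<in> Aut H"
  shows "KS_partition H (\<sigma> ` A) (\<sigma> ` B)"
proof -
  have AB: "A \<union> B = verts H" "A \<inter> B = {}"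
    and uni: "uniform_adj H True A A" "uniform_adj H False B B"
    using KS unfolding KS_partition_iff_uniform_adj[OF H] by auto
  have inj: "inj_on \<sigma> (verts H)" and im: "\<sigma> ` verts H = verts H"
    using Aut_bij[OF \<sigma>] by (auto simp: bij_betw_def)
  have sub: "A \<subseteq> verts H" "B \<subseteq> verts H"
    using AB(1) by auto
  have "\<sigma> ` A \<union> \<sigma> ` B = verts H"
    using AB(1) im by (simp flip: image_Un)
  moreover have "\<sigma> ` A \<inter> \<sigma> ` B = {}"
    by (metis AB(2) image_empty inj_on_image_Int[OF inj sub])
  moreover have "uniform_adj H True (\<sigma> ` A) (\<sigma> ` A)" "uniform_adj H False (\<sigma> ` B) (\<sigma> ` B)"
    using uni by (simp_all add: uniform_adj_Aut_image[OF \<sigma>] sub)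
  ultimately show ?thesis
    unfolding KS_partition_iff_uniform_adj[OF H] by blast
qed

lemma Aut_image_KS_clique:
  assumes "is_graph H" "indecomposable H" "card (verts H) \<noteq> 1"
    and "KS_partition H A B" "\<sigma> \<in> Aut H"
  shows "\<sigma> ` A = A"
  using KS_partition_subset[OF assms(1-3)] KS_partition_Aut_image[OF assms(1,4,5)] assms(4)
  by (meson subset_antisym)

lemma verts_compose: "verts (compose m Gs As Bs) = (\<Union>i\<le>m. verts (Gs i))"
  by (induction m) (auto simp: le_Suc_eq)

lemma adj_compose_iff:
  "adj (compose m Gs As Bs) u v \<longleftrightarrow> (\<exists>p\<le>m. adj (Gs p) u v) \<or>
     (\<exists>p\<le>m. \<exists>q<p. (u \<in> As p \<and> v \<in> verts (Gs q)) \<or> (v \<in> As p \<and> u \<in> verts (Gs q)))"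
proof (induction m)
  case (Suc m)
  have ex_le_Suc: "(\<exists>p\<le>Suc m. P p) \<longleftrightarrow> P (Suc m) \<or> (\<exists>p\<le>m. P p)" for P
    by (metis le_Suc_eq)
  show ?case
    unfolding compose.simps adj_comp_split Suc.IH verts_compose ex_le_Suc less_Suc_eq_le
    by blast
qed simp

section \<open>Automorphisms fix the prefixes ending at unjoined components\<close>

locale canonical_components =
  fixes K :: nat and Gs :: "nat \<Rightarrow> 'a graph" and As Bs :: "nat \<Rightarrow> 'a set"
  assumes is_graph_Gs: "i \<le> K \<Longrightarrow> is_graph (Gs i)"
    and verts_Gs_nonempty: "i \<le> K \<Longrightarrow> verts (Gs i) \<noteq> {}"
    and indecomposable_Gs: "i \<le> K \<Longrightarrow> indecomposable (Gs i)"
    and KS_partition_Gs: "1 \<le> i \<Longrightarrow> i \<le> K \<Longrightarrow> KS_partition (Gs i) (As i) (Bs i)"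
    and verts_Gs_disjoint: "i \<le> K \<Longrightarrow> j \<le> K \<Longrightarrow> i \<noteq> j \<Longrightarrow> verts (Gs i) \<inter> verts (Gs j) = {}"
begin

abbreviation V :: "nat \<Rightarrow> 'a set" where "V i \<equiv> verts (Gs i)"
abbreviation GG :: "'a graph" where "GG \<equiv> compose K Gs As Bs"
abbreviation ct :: "nat \<Rightarrow> sv_type option" where "ct \<equiv> comp_type K Gs As"

definition prefix :: "nat \<Rightarrow> 'a set" where
  "prefix m = (\<Union>i\<le>m. V i)"

definition idx :: "'a \<Rightarrow> nat" where
  "idx x = (THE i. i \<le> K \<and> x \<in> V i)"

lemma idx_eq:
  assumes "i \<le> K" "x \<in> V i"
  shows "idx x = i"
  unfolding idx_def
proof (rule the_equality)
  show "\<And>j. j \<le> K \<and> x \<in> V j \<Longrightarrow> j = i"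
    using verts_Gs_disjoint assms by blast
qed (use assms in simp)

lemma mem_prefix_iff: "x \<in> prefix m \<longleftrightarrow> (\<exists>i\<le>m. x \<in> V i)"
  by (auto simp: prefix_def)

lemma V_subset_prefix: "i \<le> m \<Longrightarrow> V i \<subseteq> prefix m"
  by (auto simp: prefix_def)

lemma prefix_mono: "i \<le> m \<Longrightarrow> prefix i \<subseteq> prefix m"
  unfolding prefix_def by (rule UN_mono) auto

lemma prefix_Suc: "prefix (Suc m) = prefix m \<union> V (Suc m)"
  by (auto simp: prefix_def le_Suc_eq)

lemma idx_le_iff: "x \<in> prefix K \<Longrightarrow> m \<le> K \<Longrightarrow> idx x \<le> m \<longleftrightarrow> x \<in> prefix m"
  by (metis idx_eq le_trans mem_prefix_iff)

lemma mem_V_idx: "x \<in> prefix K \<Longrightarrow> idx x \<le> K \<and> x \<in> V (idx x)"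
  by (metis idx_eq mem_prefix_iff)

lemma verts_GG: "verts GG = prefix K"
  by (simp add: verts_compose prefix_def)

lemma finite_prefix: "finite (prefix m)" if "m \<le> K"
  using that is_graph_Gs unfolding prefix_def is_graph_def by auto

lemma As_subset: "1 \<le> i \<Longrightarrow> i \<le> K \<Longrightarrow> As i \<subseteq> V i"
  using KS_partition_Gs unfolding KS_partition_def by blast

lemma Bs_subset: "1 \<le> i \<Longrightarrow> i \<le> K \<Longrightarrow> Bs i \<subseteq> V i"
  using KS_partition_Gs unfolding KS_partition_def by blast

lemma adj_GG:
  assumes u: "u \<in> V i" "i \<le> K" and v: "v \<in> V j" "j \<le> K"
  shows "adj GG u v \<longleftrightarrow> (if i = j then adj (Gs i) u v else if j < i then u \<in> As i else v \<in> As j)"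
proof -
  have u_idx: "p = i" if "p \<le> K" "u \<in> V p" for p
    using idx_eq[OF that] idx_eq[OF u(2,1)] by simp
  have v_idx: "p = j" if "p \<le> K" "v \<in> V p" for p
    using idx_eq[OF that] idx_eq[OF v(2,1)] by simp
  have inside: "(\<exists>p\<le>K. adj (Gs p) u v) \<longleftrightarrow> i = j \<and> adj (Gs i) u v"
  proof
    assume "\<exists>p\<le>K. adj (Gs p) u v"
    then obtain p where p: "p \<le> K" "adj (Gs p) u v"
      by blast
    then have "p = i" "p = j"
      using adj_imp_verts[OF is_graph_Gs[OF p(1)]] u_idx v_idx by auto
    then show "i = j \<and> adj (Gs i) u v"
      using p by simp
  qed (use u in blast)
  have across: "(\<exists>p\<le>K. \<exists>q<p. (u \<in> As p \<and> v \<in> V q) \<or> (v \<in> As p \<and> u \<in> V q))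
      \<longleftrightarrow> (j < i \<and> u \<in> As i) \<or> (i < j \<and> v \<in> As j)"
  proof
    assume "\<exists>p\<le>K. \<exists>q<p. (u \<in> As p \<and> v \<in> V q) \<or> (v \<in> As p \<and> u \<in> V q)"
    then obtain p q where pq: "p \<le> K" "q < p" "(u \<in> As p \<and> v \<in> V q) \<or> (v \<in> As p \<and> u \<in> V q)"
      by blast
    have sub: "As p \<subseteq> V p" and q: "q \<le> K"
      using As_subset pq(1,2) by auto
    from pq(3) show "(j < i \<and> u \<in> As i) \<or> (i < j \<and> v \<in> As j)"
    proof
      assume "u \<in> As p \<and> v \<in> V q"
      moreover from this have "p = i" "q = j"
        using u_idx[OF pq(1)] v_idx[OF q] sub by auto
      ultimately show ?thesis
        using pq(2) by simp
    next
      assume "v \<in> As p \<and> u \<in> V q"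
      moreover from this have "p = j" "q = i"
        using v_idx[OF pq(1)] u_idx[OF q] sub by auto
      ultimately show ?thesis
        using pq(2) by simp
    qed
  qed (use u v in blast)
  show ?thesis
    unfolding adj_compose_iff inside across by auto
qed

lemma adj_GG_same: "u \<in> V i \<Longrightarrow> v \<in> V i \<Longrightarrow> i \<le> K \<Longrightarrow> adj GG u v = adj (Gs i) u v"
  using adj_GG by simp

lemma adj_GG_below: "u \<in> V i \<Longrightarrow> v \<in> V j \<Longrightarrow> j < i \<Longrightarrow> i \<le> K \<Longrightarrow> adj GG u v \<longleftrightarrow> u \<in> As i"
  using adj_GG by simp

definition joined :: "nat \<Rightarrow> bool" where
  "joined j \<longleftrightarrow> ct j \<noteq> None \<and> ct j = ct (Suc j)"

lemma comp_type_joined_run: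
  "\<forall>j. i \<le> j \<and> j < i' \<longrightarrow> joined j \<Longrightarrow> i < i' \<Longrightarrow> ct i \<noteq> None \<and> ct i' = ct i"
proof (induction i')
  case (Suc n)
  have "joined n"
    using Suc.prems by simp
  show ?case
  proof (cases "i = n")
    case True
    then show ?thesis
      using \<open>joined n\<close> unfolding joined_def by metis
  next
    case False
    have "\<forall>j. i \<le> j \<and> j < n \<longrightarrow> joined j"
      using Suc.prems(1) by simp
    then have "ct i \<noteq> None \<and> ct n = ct i"
      using Suc.IH Suc.prems(2) False by simp
    then show ?thesis
      using \<open>joined n\<close> unfolding joined_def by simp
  qed
qed simp

lemma comp_type_single:
  assumes "1 \<le> i" "i \<le> K" "V i = {y}" "As i = (if c then V i else {})"
  shows "ct i = Some (if c then TK1 else TS1)"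
  using assms by (simp add: comp_type_def)

lemma uniform_vertex_above:
  assumes x: "x \<in> V i" and "i < n" "n \<le> K" and uni: "uniform_adj GG c {x} (V n)"
  shows "(\<exists>y. V n = {y}) \<and> As n = (if c then V n else {})"
proof
  have n: "1 \<le> n" "n \<le> K"
    using assms by auto
  have "v \<in> As n \<longleftrightarrow> c" if "v \<in> V n" for v
  proof -
    have "v \<noteq> x"
      using that x idx_eq assms by (metis less_imp_le_nat less_irrefl order.trans)
    then have "adj GG x v = c"
      using uni that unfolding uniform_adj_def by auto
    then show ?thesis
      using adj_GG_below[OF that x] assms adj_sym[of GG] by auto
  qed
  then show As: "As n = (if c then V n else {})"
    using As_subset[OF n] by auto
  have "uniform_adj (Gs n) c (V n) (V n)"
    using KS_partition_Gs[OF n] As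
    unfolding KS_partition_iff_uniform_adj[OF is_graph_Gs[OF n(2)]]
    by (cases c) auto
  then show "\<exists>y. V n = {y}"
    using indecomposable_uniform_graph is_graph_Gs indecomposable_Gs verts_Gs_nonempty n(2) by blast
qed

lemma uniform_vertex_component:
  assumes n: "n \<le> K" and x: "x \<in> prefix n" and uni: "uniform_adj GG c {x} (prefix n)"
  shows "(\<exists>y. V n = {y}) \<and> (1 \<le> n \<longrightarrow> As n = (if c then V n else {}))"
proof -
  define i where "i = idx x"
  have i: "i \<le> n" "x \<in> V i"
    using x idx_le_iff[of x n] mem_V_idx[of x] prefix_mono[OF n] n unfolding i_def by auto
  have uni_V: "uniform_adj GG c {x} (V p)" if "p \<le> n" for p
    using uniform_adj_mono[OF uni] V_subset_prefix[OF that] by blast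
  show ?thesis
  proof (cases "i < n")
    case True
    then show ?thesis
      using uniform_vertex_above[OF i(2) True n uni_V] by auto
  next
    case False
    then have "i = n"
      using i by simp
    then have "uniform_adj (Gs n) c {x} (V n)"
      using uni_V[of n] i n uniform_adj_cong[of "{x}" "V n" GG "Gs n"] adj_GG_same by auto
    then have Vn: "V n = {x}"
      using indecomposable_uniform_vertex[OF is_graph_Gs[of n] indecomposable_Gs[of n]] i \<open>i = n\<close> n
      by simp
    have "As n = (if c then V n else {})" if "1 \<le> n"
    proof -
      obtain v where v: "v \<in> V 0"
        using verts_Gs_nonempty by blast
      have "x \<noteq> v"
        using v Vn that idx_eq n by (metis insertI1 not_one_le_zero le0)
      then have "adj GG x v = c"
        using uni_V[of 0] v unfolding uniform_adj_def by auto
      then have "x \<in> As n \<longleftrightarrow> c"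
        using adj_GG_below[of x n v 0] Vn v that n by auto
      then show ?thesis
        using As_subset[OF that n] Vn by auto
    qed
    then show ?thesis
      using Vn by blast
  qed
qed

lemma uniform_vertex_joined:
  assumes j: "Suc j \<le> K" and x: "x \<in> prefix j"
    and uni: "uniform_adj GG c {x} (prefix (Suc j))"
  shows "joined j"
proof -
  have prefix: "prefix j \<subseteq> prefix (Suc j)"
    by (rule prefix_mono) simp
  obtain y where top: "V (Suc j) = {y}" "As (Suc j) = (if c then V (Suc j) else {})"
    using uniform_vertex_component[OF j _ uni] x prefix by auto
  have low: "(\<exists>y. V j = {y}) \<and> (1 \<le> j \<longrightarrow> As j = (if c then V j else {}))"
    using uniform_vertex_component[OF _ x uniform_adj_mono[OF uni _ prefix]] j by simp
  have ct_top: "ct (Suc j) = Some (if c then TK1 else TS1)"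
    using comp_type_single[OF _ j top] by simp
  show ?thesis
  proof (cases "j = 0")
    case True
    then have "ct j = ct (Suc j)"
      using low top j by (auto simp: comp_type_def)
    then show ?thesis
      using ct_top by (simp add: joined_def)
  next
    case False
    then show ?thesis
      using ct_top low comp_type_single[of j] j unfolding joined_def by auto
  qed
qed

lemma adj_GG_idx:
  assumes "u \<in> prefix K" "v \<in> prefix K"
  shows "adj GG u v \<longleftrightarrow> (if idx u = idx v then adj (Gs (idx u)) u v
    else if idx v < idx u then u \<in> As (idx u) else v \<in> As (idx v))"
  using adj_GG[of u "idx u" v "idx v"] mem_V_idx[OF assms(1)] mem_V_idx[OF assms(2)] by simp

lemma mem_UN_above_iff:
  assumes S: "\<And>i. j < i \<Longrightarrow> i \<le> K \<Longrightarrow> S i \<subseteq> V i"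
  shows "x \<in> (\<Union>i\<in>{j<..K}. S i) \<longleftrightarrow> x \<in> prefix K \<and> j < idx x \<and> x \<in> S (idx x)"
proof
  assume "x \<in> (\<Union>i\<in>{j<..K}. S i)"
  then obtain i where i: "j < i" "i \<le> K" "x \<in> S i"
    by auto
  then have "x \<in> V i"
    using S by blast
  then show "x \<in> prefix K \<and> j < idx x \<and> x \<in> S (idx x)"
    using i idx_eq V_subset_prefix[OF i(2)] by auto
next
  assume "x \<in> prefix K \<and> j < idx x \<and> x \<in> S (idx x)"
  then show "x \<in> (\<Union>i\<in>{j<..K}. S i)"
    using mem_V_idx by auto
qed

lemma KS_partition_Gs_uniform:
  assumes "1 \<le> i" "i \<le> K"
  shows "As i \<union> Bs i = V i" "As i \<inter> Bs i = {}"
    "uniform_adj (Gs i) True (As i) (As i)" "uniform_adj (Gs i) False (Bs i) (Bs i)"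
  using KS_partition_Gs[OF assms]
  by (simp_all add: KS_partition_iff_uniform_adj[OF is_graph_Gs[OF assms(2)]])

lemma mem_Un_prefix_idx: "j \<le> K \<Longrightarrow> v \<in> S \<union> prefix j \<Longrightarrow> S \<subseteq> prefix K \<Longrightarrow>
  v \<in> prefix K \<and> (j < idx v \<longrightarrow> v \<in> S)"
  using idx_le_iff[of v j] prefix_mono[of j K] by auto

lemma uniform_adj_As_above:
  assumes j: "j \<le> K"
  defines "A \<equiv> \<Union>i\<in>{j<..K}. As i"
  shows "uniform_adj GG True A (A \<union> prefix j)"
  unfolding uniform_adj_def
proof (intro ballI impI)
  have memA: "x \<in> A \<longleftrightarrow> x \<in> prefix K \<and> j < idx x \<and> x \<in> As (idx x)" for x
    unfolding A_def by (intro mem_UN_above_iff As_subset) auto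
  fix u v assume u: "u \<in> A" and v: "v \<in> A \<union> prefix j" and "u \<noteq> v"
  have u': "u \<in> prefix K" "j < idx u" "u \<in> As (idx u)" "idx u \<le> K"
    using u memA mem_V_idx by auto
  have v': "v \<in> prefix K" "j < idx v \<Longrightarrow> v \<in> As (idx v)"
    using mem_Un_prefix_idx[OF j v] memA by auto
  consider "idx v = idx u" | "idx v < idx u" | "idx u < idx v"
    by linarith
  then show "adj GG u v = True"
  proof cases
    case 1
    then show ?thesis
      using adj_GG_idx[OF u'(1) v'(1)] KS_partition_Gs_uniform(3)[of "idx u"] u' v' \<open>u \<noteq> v\<close>
      unfolding uniform_adj_def by auto
  qed (use adj_GG_idx[OF u'(1) v'(1)] u' v' in auto)
qed

lemma uniform_adj_Bs_above:
  assumes j: "j \<le> K"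
  defines "B \<equiv> \<Union>i\<in>{j<..K}. Bs i"
  shows "uniform_adj GG False B (B \<union> prefix j)"
  unfolding uniform_adj_def
proof (intro ballI impI)
  have memB: "x \<in> B \<longleftrightarrow> x \<in> prefix K \<and> j < idx x \<and> x \<in> Bs (idx x)" for x
    unfolding B_def by (intro mem_UN_above_iff Bs_subset) auto
  have not_As: "x \<notin> As (idx x)" if "x \<in> B" for x
    using that memB KS_partition_Gs_uniform(2)[of "idx x"] mem_V_idx by auto
  fix u v assume u: "u \<in> B" and v: "v \<in> B \<union> prefix j" and "u \<noteq> v"
  have u': "u \<in> prefix K" "j < idx u" "u \<in> Bs (idx u)" "idx u \<le> K"
    using u memB mem_V_idx by auto
  have v': "v \<in> prefix K" "j < idx v \<Longrightarrow> v \<in> B"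
    using mem_Un_prefix_idx[OF j v] memB by auto
  consider "idx v = idx u" | "idx v < idx u" | "idx u < idx v"
    by linarith
  then show "adj GG u v = False"
  proof cases
    case 1
    then show ?thesis
      using adj_GG_idx[OF u'(1) v'(1)] KS_partition_Gs_uniform(4)[of "idx u"] u' v' memB \<open>u \<noteq> v\<close>
      unfolding uniform_adj_def by auto
  qed (use adj_GG_idx[OF u'(1) v'(1)] u' v' not_As u in auto)
qed

lemma prefix_decomposes:
  assumes j: "j < K"
  shows "decomposes_at GG (prefix K) (prefix j)"
proof (rule decomposes_atI)
  define A where "A = (\<Union>i\<in>{j<..K}. As i)"
  define B where "B = (\<Union>i\<in>{j<..K}. Bs i)"
  have memA: "x \<in> A \<longleftrightarrow> x \<in> prefix K \<and> j < idx x \<and> x \<in> As (idx x)" for x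
    unfolding A_def by (intro mem_UN_above_iff As_subset) auto
  have memB: "x \<in> B \<longleftrightarrow> x \<in> prefix K \<and> j < idx x \<and> x \<in> Bs (idx x)" for x
    unfolding B_def by (intro mem_UN_above_iff Bs_subset) auto
  have upper: "x \<in> prefix K - prefix j \<longleftrightarrow> x \<in> prefix K \<and> j < idx x" for x
    using idx_le_iff[of x j] j by auto
  have "x \<in> A \<union> B \<longleftrightarrow> x \<in> prefix K - prefix j" for x
    using memA[of x] memB[of x] upper[of x] KS_partition_Gs_uniform(1)[of "idx x"] mem_V_idx[of x]
    by auto
  then show "A \<union> B = prefix K - prefix j"
    by blast
  have "x \<notin> B" if "x \<in> A" for x
    using that memA[of x] memB[of x] KS_partition_Gs_uniform(2)[of "idx x"] mem_V_idx[of x] by auto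
  then show "A \<inter> B = {}"
    by blast
  show "prefix K - prefix j \<noteq> {}"
    using verts_Gs_nonempty[of K] upper idx_eq V_subset_prefix[of K K] j by fastforce
  show "uniform_adj GG True A (A \<union> prefix j)"
    using uniform_adj_As_above j unfolding A_def by simp
  show "uniform_adj GG False B (B \<union> prefix j)"
    using uniform_adj_Bs_above j unfolding B_def by simp
qed (use j prefix_mono in simp)

lemma decomposes_at_prefix_top:
  assumes n: "n \<le> K" and dec: "decomposes_at GG (prefix n) Y"
  shows "V n \<subseteq> Y \<or> V n \<inter> Y = {}"
proof (rule ccontr)
  assume "\<not> (V n \<subseteq> Y \<or> V n \<inter> Y = {})"
  then have split: "V n \<inter> Y \<noteq> {}" "V n - Y \<noteq> {}"
    by auto
  obtain A B where AB: "A \<union> B = prefix n - Y" "A \<inter> B = {}"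
    and A: "uniform_adj GG True A (A \<union> Y)" and B: "uniform_adj GG False B (B \<union> Y)"
    using dec unfolding decomposes_at_def by blast
  have "adj (Gs n) u v = adj GG u v" if "u \<in> V n" "v \<in> V n" for u v
    using adj_GG_same[OF that n] by simp
  then have same: "uniform_adj (Gs n) c X Z = uniform_adj GG c X Z"
    if "X \<subseteq> V n" "Z \<subseteq> V n" for c X Z
    using that by (intro uniform_adj_cong) auto
  have "decomposes_at (Gs n) (V n) (V n \<inter> Y)"
  proof (rule decomposes_atI[where A = "A \<inter> V n" and B = "B \<inter> V n"])
    show "uniform_adj (Gs n) True (A \<inter> V n) (A \<inter> V n \<union> V n \<inter> Y)"
      using same uniform_adj_mono[OF A] by (metis Int_lower2 Int_Un_distrib2 inf_commute inf_le1 sup_mono)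
    show "uniform_adj (Gs n) False (B \<inter> V n) (B \<inter> V n \<union> V n \<inter> Y)"
      using same uniform_adj_mono[OF B] by (metis Int_lower2 Int_Un_distrib2 inf_commute inf_le1 sup_mono)
  qed (use split AB V_subset_prefix[of n n] in auto)
  then show False
    using not_indecomposable_if_decomposes_at is_graph_Gs indecomposable_Gs n split(1) by blast
qed

lemma decomposes_at_prefix_complement_uniform:
  assumes m: "Suc m \<le> K" and dec: "decomposes_at GG (prefix (Suc m)) Y"
    and above: "V (Suc m) \<subseteq> Y"
  shows "\<exists>c. uniform_adj GG c (prefix (Suc m) - Y) (prefix (Suc m))"
proof -
  obtain A B where Y: "Y \<subseteq> prefix (Suc m)"
    and AB: "A \<union> B = prefix (Suc m) - Y" "A \<inter> B = {}"
    and A: "uniform_adj GG True A (A \<union> Y)" and B: "uniform_adj GG False B (B \<union> Y)"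
    using dec unfolding decomposes_at_def by blast
  obtain w where w: "w \<in> V (Suc m)"
    using verts_Gs_nonempty[OF m] by (meson equals0I)
  define c where "c \<longleftrightarrow> w \<in> As (Suc m)"
  have adj_w: "adj GG z w = c" if z: "z \<in> prefix m" for z
  proof -
    obtain i where "i \<le> m" "z \<in> V i"
      using z unfolding mem_prefix_iff by blast
    then have "adj GG w z \<longleftrightarrow> w \<in> As (Suc m)"
      using adj_GG_below[OF w] m by simp
    then show ?thesis
      using adj_sym[of GG] c_def by simp
  qed
  have X: "prefix (Suc m) - Y \<subseteq> prefix m" "(prefix (Suc m) - Y) \<union> Y = prefix (Suc m)"
    using above Y prefix_Suc by auto
  have wY: "w \<in> Y"
    using w above by blast
  have side: "b \<in> prefix m" "b \<noteq> w" if "b \<in> A \<union> B" for b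
    using that AB(1) X(1) wY by auto
  \<comment> \<open>Adjacency to \<open>w \<in> Y\<close> is the same for all of \<open>prefix m\<close>, so one side of the partition is empty.\<close>
  have "uniform_adj GG c (prefix (Suc m) - Y) (prefix (Suc m))"
  proof (cases c)
    case True
    have "adj GG b w = False" if "b \<in> B" for b
      using uniform_adjD[OF B that _ side(2)] wY that by simp
    then have "B = {}"
      using adj_w side True by blast
    then show ?thesis
      using A AB(1) X(2) True by simp
  next
    case False
    have "adj GG a w = True" if "a \<in> A" for a
      using uniform_adjD[OF A that _ side(2)] wY that by simp
    then have "A = {}"
      using adj_w side False by blast
    then show ?thesis
      using B AB(1) X(2) False by simp
  qed
  then show ?thesis ..
qed

lemma decomposes_at_prefix_nested:
  "m \<le> K \<Longrightarrow> decomposes_at GG (prefix m) Y \<Longrightarrow> j < m \<Longrightarrow> \<not> joined j \<Longrightarrow>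
   prefix j \<subseteq> Y \<or> Y \<subseteq> prefix j"
proof (induction m arbitrary: Y)
  case (Suc m)
  note dec = Suc.prems(2)
  consider (above) "V (Suc m) \<subseteq> Y" | (below) "V (Suc m) \<inter> Y = {}"
    using decomposes_at_prefix_top[OF Suc.prems(1) dec] by blast
  then show ?case
  proof cases
    case above
    obtain c where c: "uniform_adj GG c (prefix (Suc m) - Y) (prefix (Suc m))"
      using decomposes_at_prefix_complement_uniform[OF Suc.prems(1) dec above] ..
    have "x \<in> Y" if x: "x \<in> prefix j" for x
    proof (rule ccontr)
      assume "x \<notin> Y"
      then have "uniform_adj GG c {x} (prefix (Suc j))"
        using x prefix_mono[of j "Suc m"] prefix_mono[of "Suc j" "Suc m"] Suc.prems(3)
        by (intro uniform_adj_mono[OF c]) auto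
      then show False
        using uniform_vertex_joined[OF _ x] Suc.prems by simp
    qed
    then show ?thesis
      by blast
  next
    case below
    obtain A B where Y: "Y \<subseteq> prefix (Suc m)"
      and AB: "A \<union> B = prefix (Suc m) - Y" "A \<inter> B = {}"
      and A: "uniform_adj GG True A (A \<union> Y)" and B: "uniform_adj GG False B (B \<union> Y)"
      using dec unfolding decomposes_at_def by blast
    have Ym: "Y \<subseteq> prefix m"
      using below Y prefix_Suc by auto
    show ?thesis
    proof (cases "j = m \<or> Y = prefix m")
      case True
      then show ?thesis
        using Ym prefix_mono[of j m] Suc.prems(3) by auto
    next
      case False
      have "decomposes_at GG (prefix m) Y"
      proof (rule decomposes_atI[where A = "A \<inter> prefix m" and B = "B \<inter> prefix m"])
        show "uniform_adj GG True (A \<inter> prefix m) (A \<inter> prefix m \<union> Y)"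
          by (rule uniform_adj_mono[OF A]) auto
        show "uniform_adj GG False (B \<inter> prefix m) (B \<inter> prefix m \<union> Y)"
          by (rule uniform_adj_mono[OF B]) auto
      qed (use Ym False AB prefix_Suc in auto)
      then show ?thesis
        using Suc.IH Suc.prems False by simp
    qed
  qed
qed simp

lemma Aut_image_prefix:
  assumes \<pi>: "\<pi> \<in> Aut GG" and j: "j < K" "\<not> joined j"
  shows "\<pi> ` prefix j = prefix j"
proof -
  have "decomposes_at GG (prefix K) (\<pi> ` prefix j)"
    using decomposes_at_Aut_image[OF \<pi>] prefix_decomposes[OF j(1)] verts_GG by simp
  then have nested: "prefix j \<subseteq> \<pi> ` prefix j \<or> \<pi> ` prefix j \<subseteq> prefix j"
    using decomposes_at_prefix_nested[of K] j by blast
  have "inj_on \<pi> (prefix j)"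
    using Aut_bij[OF \<pi>] prefix_mono[of j K] j verts_GG by (auto simp: bij_betw_def intro: inj_on_subset)
  then have "card (\<pi> ` prefix j) = card (prefix j)"
    by (rule card_image)
  then show ?thesis
    using nested finite_prefix j by (metis card_subset_eq finite_imageI less_imp_le_nat)
qed

end

section \<open>Restricting and gluing automorphisms\<close>

lemma carrier_Aut_group [simp]: "carrier (Aut_group G) = Aut G"
  by (simp add: Aut_group_def)

lemma mult_Aut_group [simp]: "x \<otimes>\<^bsub>Aut_group G\<^esub> y = x \<circ> y"
  by (simp add: Aut_group_def)

lemma Aut_fixes_non_verts: "\<pi> \<in> Aut G \<Longrightarrow> x \<notin> verts G \<Longrightarrow> \<pi> x = x"
  by (simp add: Aut_def)

lemma perm_restrict_comp:
  "\<sigma> ` W \<subseteq> W \<Longrightarrow> perm_restrict (\<pi> \<circ> \<sigma>) W = perm_restrict \<pi> W \<circ> perm_restrict \<sigma> W"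
  by (rule ext) (auto simp: perm_restrict_def)

lemma image_if_perm_restrict_Aut:
  assumes "perm_restrict \<pi> (verts H) \<in> Aut H"
  shows "\<pi> ` verts H = verts H"
proof -
  have "\<pi> ` verts H = perm_restrict \<pi> (verts H) ` verts H"
    by (simp add: perm_restrict_def)
  then show ?thesis
    using Aut_bij[OF assms] by (simp add: bij_betw_def)
qed

lemma perm_restrict_Aut_subgraph:
  assumes \<pi>: "\<pi> \<in> Aut G" and sub: "verts H \<subseteq> verts G" and im: "\<pi> ` verts H = verts H"
    and adj: "\<And>u v. u \<in> verts H \<Longrightarrow> v \<in> verts H \<Longrightarrow> adj H u v = adj G u v"
  shows "perm_restrict \<pi> (verts H) \<in> Aut H"
proof -
  let ?\<rho> = "perm_restrict \<pi> (verts H)"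
  have "inj_on \<pi> (verts H)"
    using Aut_bij[OF \<pi>] sub by (meson bij_betw_imp_inj_on inj_on_subset)
  then have "inj_on ?\<rho> (verts H)"
    by (simp add: inj_on_def perm_restrict_def)
  moreover have "?\<rho> ` verts H = verts H"
    using im by (simp add: perm_restrict_def)
  moreover have "adj H (?\<rho> u) (?\<rho> v) = adj H u v" if "u \<in> verts H" "v \<in> verts H" for u v
  proof -
    have "\<pi> u \<in> verts H" "\<pi> v \<in> verts H"
      using that im by auto
    then show ?thesis
      using that sub adj Aut_adj[OF \<pi>] by (simp add: perm_restrict_def subset_iff)
  qed
  ultimately show ?thesis
    by (simp add: Aut_def bij_betw_def perm_restrict_def)
qed

lemma perm_restrict_iso_product_group:
  assumes verts_G: "verts G = (\<Union>i\<in>I. verts (H i))"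
    and restrict: "\<And>\<pi> i. \<pi> \<in> Aut G \<Longrightarrow> i \<in> I \<Longrightarrow> perm_restrict \<pi> (verts (H i)) \<in> Aut (H i)"
    and glue: "\<And>\<pi>s. \<forall>i\<in>I. \<pi>s i \<in> Aut (H i) \<Longrightarrow> \<exists>\<pi>\<in>Aut G. \<forall>i\<in>I. \<forall>x\<in>verts (H i). \<pi> x = \<pi>s i x"
  shows "(\<lambda>\<pi>. \<lambda>i\<in>I. perm_restrict \<pi> (verts (H i)))
           \<in> iso (Aut_group G) (product_group I (\<lambda>i. Aut_group (H i)))"
proof -
  let ?\<Phi> = "\<lambda>\<pi>. \<lambda>i\<in>I. perm_restrict \<pi> (verts (H i))"
  have into: "?\<Phi> \<pi> \<in> (\<Pi>\<^sub>E i\<in>I. Aut (H i))" if "\<pi> \<in> Aut G" for \<pi>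
    using restrict[OF that] by simp
  have "?\<Phi> \<in> hom (Aut_group G) (product_group I (\<lambda>i. Aut_group (H i)))"
  proof (rule homI)
    fix \<pi> \<sigma> assume "\<pi> \<in> carrier (Aut_group G)" and \<sigma>: "\<sigma> \<in> carrier (Aut_group G)"
    have "\<sigma> ` verts (H i) = verts (H i)" if "i \<in> I" for i
      using \<sigma> image_if_perm_restrict_Aut[OF restrict[OF _ that]] by simp
    then show "?\<Phi> (\<pi> \<otimes>\<^bsub>Aut_group G\<^esub> \<sigma>) =
        ?\<Phi> \<pi> \<otimes>\<^bsub>product_group I (\<lambda>i. Aut_group (H i))\<^esub> ?\<Phi> \<sigma>"
      by (simp add: perm_restrict_comp cong: restrict_cong)
  qed (use into in simp)
  moreover have "inj_on ?\<Phi> (Aut G)"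
  proof (rule inj_onI, rule ext)
    fix \<pi> \<sigma> x assume \<pi>: "\<pi> \<in> Aut G" and \<sigma>: "\<sigma> \<in> Aut G" and eq: "?\<Phi> \<pi> = ?\<Phi> \<sigma>"
    show "\<pi> x = \<sigma> x"
    proof (cases "x \<in> verts G")
      case True
      then obtain i where "i \<in> I" "x \<in> verts (H i)"
        using verts_G by blast
      then show ?thesis
        using fun_cong[OF fun_cong[OF eq, of i], of x] by (simp add: perm_restrict_def)
    qed (simp add: Aut_fixes_non_verts[OF \<pi>] Aut_fixes_non_verts[OF \<sigma>])
  qed
  moreover have "(\<Pi>\<^sub>E i\<in>I. Aut (H i)) \<subseteq> ?\<Phi> ` Aut G"
  proof
    fix \<psi> assume \<psi>: "\<psi> \<in> (\<Pi>\<^sub>E i\<in>I. Aut (H i))"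
    then have \<psi>_Aut: "\<forall>i\<in>I. \<psi> i \<in> Aut (H i)"
      by (simp add: PiE_iff)
    then obtain \<pi> where \<pi>: "\<pi> \<in> Aut G" and agree: "\<forall>i\<in>I. \<forall>x\<in>verts (H i). \<pi> x = \<psi> i x"
      using glue by blast
    have "?\<Phi> \<pi> i = \<psi> i" for i
    proof (cases "i \<in> I")
      case True
      have "\<psi> i \<in> Aut (H i)"
        using \<psi>_Aut True by blast
      have "perm_restrict \<pi> (verts (H i)) = \<psi> i"
      proof
        fix x
        show "perm_restrict \<pi> (verts (H i)) x = \<psi> i x"
        proof (cases "x \<in> verts (H i)")
          case False
          then show ?thesis
            using Aut_fixes_non_verts[OF \<open>\<psi> i \<in> Aut (H i)\<close> False] by (simp add: perm_restrict_def)
        qed (use agree True in \<open>simp add: perm_restrict_def\<close>)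
      qed
      then show ?thesis
        using True by simp
    next
      case False
      then show ?thesis
        using PiE_arb[OF \<psi> False] by simp
    qed
    then have "?\<Phi> \<pi> = \<psi>" ..
    then show "\<psi> \<in> ?\<Phi> ` Aut G"
      using image_eqI[where f = ?\<Phi>, OF _ \<pi>] by simp
  qed
  then have "?\<Phi> ` Aut G = (\<Pi>\<^sub>E i\<in>I. Aut (H i))"
    using into by blast
  ultimately show ?thesis
    unfolding iso_def bij_betw_def by simp
qed

text \<open>The adjacency structure of a composition \<open>(H l, A l, _) \<circ> \<dots> \<circ> H 0\<close>, together with
  the property of the clique parts \<open>A a\<close> that lets automorphisms of the layers be glued.\<close>
locale layered_graph =
  fixes G :: "'a graph" and l :: nat and H :: "nat \<Rightarrow> 'a graph" and A :: "nat \<Rightarrow> 'a set"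
  assumes verts_layers: "verts G = (\<Union>a\<le>l. verts (H a))"
    and layers_disjoint: "disjoint_family_on (\<lambda>a. verts (H a)) {..l}"
    and adj_within: "a \<le> l \<Longrightarrow> u \<in> verts (H a) \<Longrightarrow> v \<in> verts (H a) \<Longrightarrow> adj G u v = adj (H a) u v"
    and adj_across: "b < a \<Longrightarrow> a \<le> l \<Longrightarrow> u \<in> verts (H a) \<Longrightarrow> v \<in> verts (H b) \<Longrightarrow>
      adj G u v \<longleftrightarrow> u \<in> A a"
    and Aut_layer_stable: "1 \<le> a \<Longrightarrow> a \<le> l \<Longrightarrow> \<sigma> \<in> Aut (H a) \<Longrightarrow> u \<in> verts (H a) \<Longrightarrow>
      \<sigma> u \<in> A a \<longleftrightarrow> u \<in> A a"
begin

definition layer :: "'a \<Rightarrow> nat" where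
  "layer x = (THE a. a \<le> l \<and> x \<in> verts (H a))"

lemma layer_eq:
  assumes "a \<le> l" "x \<in> verts (H a)"
  shows "layer x = a"
  unfolding layer_def
proof (rule the_equality)
  show "\<And>b. b \<le> l \<and> x \<in> verts (H b) \<Longrightarrow> b = a"
    using layers_disjoint assms unfolding disjoint_family_on_def by blast
qed (use assms in simp)

lemma layer_mem: "x \<in> verts G \<Longrightarrow> layer x \<le> l \<and> x \<in> verts (H (layer x))"
  using layer_eq verts_layers by auto

lemma perm_restrict_Aut_layer:
  "\<pi> \<in> Aut G \<Longrightarrow> a \<le> l \<Longrightarrow> \<pi> ` verts (H a) = verts (H a) \<Longrightarrow>
   perm_restrict \<pi> (verts (H a)) \<in> Aut (H a)"
  by (rule perm_restrict_Aut_subgraph[of \<pi> G]) (use verts_layers adj_within in auto)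

definition glue :: "(nat \<Rightarrow> 'a \<Rightarrow> 'a) \<Rightarrow> 'a \<Rightarrow> 'a" where
  "glue \<pi>s x = (if x \<in> verts G then \<pi>s (layer x) x else x)"

lemma glue_eq: "a \<le> l \<Longrightarrow> x \<in> verts (H a) \<Longrightarrow> glue \<pi>s x = \<pi>s a x"
  using layer_eq verts_layers unfolding glue_def by auto

context
  fixes \<pi>s assumes \<pi>s: "\<forall>a\<le>l. \<pi>s a \<in> Aut (H a)"
begin

lemma glue_mem_layer:
  assumes "a \<le> l" "x \<in> verts (H a)"
  shows "glue \<pi>s x \<in> verts (H a)"
proof -
  have "\<pi>s a x \<in> verts (H a)"
    using bij_betwE[OF Aut_bij[of "\<pi>s a" "H a"]] \<pi>s assms by blast
  then show ?thesis
    using glue_eq assms by simp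
qed

lemma bij_betw_glue: "bij_betw (glue \<pi>s) (verts G) (verts G)"
proof -
  have "bij_betw (glue \<pi>s) (verts (H a)) (verts (H a))" if "a \<le> l" for a
    using Aut_bij[of "\<pi>s a"] \<pi>s that glue_eq by (simp cong: bij_betw_cong)
  then show ?thesis
    unfolding verts_layers using layers_disjoint by (intro bij_betw_UNION_disjoint) auto
qed

lemma adj_glue_across:
  assumes "b < a" "a \<le> l" "u \<in> verts (H a)" "v \<in> verts (H b)"
  shows "adj G (glue \<pi>s u) (glue \<pi>s v) = adj G u v"
proof -
  have "glue \<pi>s u \<in> A a \<longleftrightarrow> u \<in> A a"
    using Aut_layer_stable \<pi>s assms glue_eq by simp
  then show ?thesis
    using adj_across[OF assms(1,2)] glue_mem_layer assms by simp
qed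

lemma adj_glue:
  assumes u: "u \<in> verts G" and v: "v \<in> verts G"
  shows "adj G (glue \<pi>s u) (glue \<pi>s v) = adj G u v"
proof -
  obtain a b where a: "a \<le> l" "u \<in> verts (H a)" and b: "b \<le> l" "v \<in> verts (H b)"
    using layer_mem[OF u] layer_mem[OF v] by blast
  consider "a = b" | "b < a" | "a < b"
    by linarith
  then show ?thesis
  proof cases
    case 1
    then show ?thesis
      using a b adj_within glue_mem_layer glue_eq Aut_adj[of "\<pi>s a" "H a"] \<pi>s by simp
  next
    case 2
    then show ?thesis
      using adj_glue_across a b by simp
  next
    case 3
    then show ?thesis
      using adj_glue_across[OF 3 b(1,2) a(2)] adj_sym[of G] by metis
  qed
qed

lemma glue_Aut: "glue \<pi>s \<in> Aut G"
  using bij_betw_glue adj_glue unfolding Aut_def glue_def by auto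

end

lemma exists_Aut_gluing:
  "\<forall>a\<le>l. \<pi>s a \<in> Aut (H a) \<Longrightarrow> \<exists>\<pi>\<in>Aut G. \<forall>a\<le>l. \<forall>x\<in>verts (H a). \<pi> x = \<pi>s a x"
  using glue_Aut glue_eq by blast

lemma perm_restrict_iso_product:
  assumes "\<And>\<pi> a. \<pi> \<in> Aut G \<Longrightarrow> a \<le> l \<Longrightarrow> \<pi> ` verts (H a) = verts (H a)"
  shows "(\<lambda>\<pi>. \<lambda>a\<in>{0..l}. perm_restrict \<pi> (verts (H a)))
           \<in> iso (Aut_group G) (product_group {0..l} (\<lambda>a. Aut_group (H a)))"
proof (rule perm_restrict_iso_product_group)
  show "verts G = (\<Union>a\<in>{0..l}. verts (H a))"
    using verts_layers by (simp add: atLeast0AtMost)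
  show "perm_restrict \<pi> (verts (H a)) \<in> Aut (H a)" if "\<pi> \<in> Aut G" "a \<in> {0..l}" for \<pi> a
    using perm_restrict_Aut_layer assms that by simp
  show "\<exists>\<pi>\<in>Aut G. \<forall>a\<in>{0..l}. \<forall>x\<in>verts (H a). \<pi> x = \<pi>s a x"
    if "\<forall>a\<in>{0..l}. \<pi>s a \<in> Aut (H a)" for \<pi>s
    using exists_Aut_gluing[of \<pi>s] that by (simp add: Ball_def)
qed

end

section \<open>The compact canonical decomposition\<close>

lemma verts_complete_graph [simp]: "verts (complete_graph U) = U"
  by (simp add: complete_graph_def verts_def)

lemma verts_edgeless_graph [simp]: "verts (edgeless_graph U) = U"
  by (simp add: edgeless_graph_def verts_def)

lemma adj_complete_graph [simp]: "adj (complete_graph U) u v \<longleftrightarrow> u \<in> U \<and> v \<in> U \<and> u \<noteq> v"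
  by (auto simp: complete_graph_def adj_def edges_def doubleton_eq_iff)

lemma adj_edgeless_graph [simp]: "\<not> adj (edgeless_graph U) u v"
  by (simp add: edgeless_graph_def adj_def edges_def)

text \<open>The clauses of \<open>compact_of\<close>, with its witness \<open>f\<close> (old index \<open>\<mapsto>\<close> new index)
  as a parameter.\<close>
locale compact_components = canonical_components K Gs As Bs
  for K :: nat and Gs :: "nat \<Rightarrow> 'a graph" and As Bs :: "nat \<Rightarrow> 'a set" +
  fixes l :: nat and f :: "nat \<Rightarrow> nat" and G' :: "nat \<Rightarrow> 'a graph" and A' :: "nat \<Rightarrow> 'a set"
  assumes f_0: "f 0 = 0"
    and f_mono: "mono_on {0..K} f"
    and f_image: "f ` {0..K} = {0..l}"
    and f_Suc_eq_iff: "i < K \<Longrightarrow> f i = f (Suc i) \<longleftrightarrow>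
      comp_type K Gs As i \<noteq> None \<and> comp_type K Gs As i = comp_type K Gs As (Suc i)"
    and G'_None: "i \<le> K \<Longrightarrow> comp_type K Gs As i = None \<Longrightarrow>
      G' (f i) = Gs i \<and> (1 \<le> f i \<longrightarrow> A' (f i) = As i)"
    and G'_Some: "i \<le> K \<Longrightarrow> comp_type K Gs As i = Some t \<Longrightarrow>
      U = \<Union>{verts (Gs i') | i'. i' \<le> K \<and> f i' = f i} \<Longrightarrow>
      G' (f i) = (if t = TK1 then complete_graph U else edgeless_graph U) \<and>
      (1 \<le> f i \<longrightarrow> A' (f i) = (if t = TK1 then U else {}))"
begin

lemma f_le: "i \<le> i' \<Longrightarrow> i' \<le> K \<Longrightarrow> f i \<le> f i'"
  using f_mono unfolding mono_on_def by simp

lemma f_eq_iff_joined: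
  assumes "i \<le> i'" "i' \<le> K"
  shows "f i = f i' \<longleftrightarrow> (\<forall>j. i \<le> j \<and> j < i' \<longrightarrow> joined j)"
  using assms
proof (induction i' rule: dec_induct)
  case (step n)
  have "f i \<le> f n" "f n \<le> f (Suc n)"
    using f_le step by auto
  then have "f i = f (Suc n) \<longleftrightarrow> f i = f n \<and> f n = f (Suc n)"
    by linarith
  also have "\<dots> \<longleftrightarrow> (\<forall>j. i \<le> j \<and> j < n \<longrightarrow> joined j) \<and> joined n"
    using step f_Suc_eq_iff[of n] unfolding joined_def by simp
  also have "\<dots> \<longleftrightarrow> (\<forall>j. i \<le> j \<and> j < Suc n \<longrightarrow> joined j)"
    using step(1) by (auto simp: less_Suc_eq)
  finally show ?case .
qed auto

lemma same_block_comp_type: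
  assumes "i \<le> K" "i' \<le> K" "f i = f i'"
  shows "ct i' = ct i \<and> (i \<noteq> i' \<longrightarrow> ct i \<noteq> None)"
proof (cases i i' rule: linorder_cases)
  case less
  then show ?thesis
    using assms f_eq_iff_joined[of i i'] comp_type_joined_run[of i i'] by simp
next
  case greater
  then show ?thesis
    using assms f_eq_iff_joined[of i' i] comp_type_joined_run[of i' i] by simp
qed simp

lemma comp_type_Some:
  assumes "p \<le> K" "ct p = Some t"
  shows "(\<exists>y. V p = {y}) \<and> (1 \<le> p \<longrightarrow> As p = (if t = TK1 then V p else {}))"
proof (cases "p = 0")
  case True
  then have "card (V p) = 1"
    using assms(2) by (auto simp: comp_type_def split: if_splits)
  then show ?thesis
    using True by (simp add: card_1_singleton_iff)
next
  case False
  then have card: "card (V p) = 1" and t: "t = (if As p = V p then TK1 else TS1)"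
    using assms by (auto simp: comp_type_def split: if_splits)
  then obtain y where y: "V p = {y}"
    by (auto simp: card_1_singleton_iff)
  then have "As p = {} \<or> As p = V p"
    using As_subset[of p] False assms(1) by auto
  then show ?thesis
    using y t by auto
qed

lemma comp_type_None: "1 \<le> p \<Longrightarrow> p \<le> K \<Longrightarrow> ct p = None \<Longrightarrow> card (V p) \<noteq> 1"
  by (auto simp: comp_type_def split: if_splits)

definition block :: "nat \<Rightarrow> 'a set" where
  "block a = {x \<in> prefix K. f (idx x) = a}"

lemma mem_block_iff: "x \<in> V i \<Longrightarrow> i \<le> K \<Longrightarrow> x \<in> block a \<longleftrightarrow> f i = a"
  unfolding block_def using idx_eq V_subset_prefix[of i K] by auto

lemma block_f: "i \<le> K \<Longrightarrow> block (f i) = \<Union>{V i' | i'. i' \<le> K \<and> f i' = f i}"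
  unfolding block_def using idx_eq mem_V_idx V_subset_prefix by fastforce

lemma block_cases:
  assumes "a \<le> l"
  obtains (single) i where "i \<le> K" "f i = a" "ct i = None" "block a = V i" "G' a = Gs i"
      "1 \<le> a \<Longrightarrow> A' a = As i"
    | (run) t where "\<And>p. p \<le> K \<Longrightarrow> f p = a \<Longrightarrow> ct p = Some t"
      "G' a = (if t = TK1 then complete_graph (block a) else edgeless_graph (block a))"
      "1 \<le> a \<Longrightarrow> A' a = (if t = TK1 then block a else {})"
proof -
  obtain i where i: "i \<le> K" "f i = a"
    using assms f_image by (metis atLeastAtMost_iff imageE le0)
  show ?thesis
  proof (cases "ct i")
    case None
    have "block a = V i"
    proof
      show "block a \<subseteq> V i"
        unfolding block_def using same_block_comp_type[OF i(1)] None i mem_V_idx by fastforce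
    qed (use i mem_block_iff in blast)
    then show ?thesis
      using G'_None[OF i(1) None] i None by (intro single[of i]) auto
  next
    case (Some t)
    then have "ct p = Some t" if "p \<le> K" "f p = a" for p
      using same_block_comp_type[OF i(1) that(1)] i that by simp
    moreover have "block a = \<Union>{V i' | i'. i' \<le> K \<and> f i' = f i}"
      using block_f[OF i(1)] i(2) by simp
    ultimately show ?thesis
      using G'_Some[OF i(1) Some] i by (intro run[of t]) auto
  qed
qed

lemma verts_G':
  assumes "a \<le> l"
  shows "verts (G' a) = block a"
  using assms
proof (cases rule: block_cases)
  case (single i)
  then show ?thesis
    by simp
next
  case (run t)
  then show ?thesis
    by simp
qed

lemma mem_blockD: "x \<in> block a \<Longrightarrow> idx x \<le> K \<and> x \<in> V (idx x) \<and> f (idx x) = a"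
  unfolding block_def using mem_V_idx by auto

lemma run_member_As:
  assumes "1 \<le> p" "p \<le> K" "ct p = Some t" "w \<in> V p"
  shows "w \<in> As p \<longleftrightarrow> t = TK1"
  using comp_type_Some[OF assms(2,3)] assms(1,4) by auto

lemma adj_within_block:
  assumes a: "a \<le> l" and u: "u \<in> block a" and v: "v \<in> block a"
  shows "adj GG u v = adj (G' a) u v"
  using a
proof (cases rule: block_cases)
  case (single i)
  then show ?thesis
    using adj_GG_same u v by simp
next
  case (run t)
  have u': "idx u \<le> K" "u \<in> V (idx u)" "ct (idx u) = Some t"
    and v': "idx v \<le> K" "v \<in> V (idx v)" "ct (idx v) = Some t"
    using mem_blockD[OF u] mem_blockD[OF v] run(1) by auto
  show ?thesis
  proof (cases "idx u = idx v")
    case True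
    then have "u = v"
      using comp_type_Some[OF u'(1,3)] u'(2) v'(2) by auto
    then show ?thesis
      using adj_GG_same[OF u'(2) u'(2) u'(1)] adj_irrefl[OF is_graph_Gs[OF u'(1)]] run(2) by simp
  next
    case False
    then have "u \<noteq> v"
      by auto
    then have "adj (G' a) u v \<longleftrightarrow> t = TK1"
      using run(2) u v by simp
    moreover have "adj GG u v \<longleftrightarrow> t = TK1"
      using adj_GG[OF u'(2,1) v'(2,1)] False run_member_As u' v' by auto
    ultimately show ?thesis
      by simp
  qed
qed

lemma adj_across_blocks:
  assumes ba: "b < a" and a: "a \<le> l" and u: "u \<in> block a" and v: "v \<in> block b"
  shows "adj GG u v \<longleftrightarrow> u \<in> A' a"
proof -
  have u': "idx u \<le> K" "u \<in> V (idx u)" "f (idx u) = a"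
    and v': "idx v \<le> K" "v \<in> V (idx v)" "f (idx v) = b"
    using mem_blockD[OF u] mem_blockD[OF v] by auto
  have "idx v < idx u"
    using f_le[of "idx u" "idx v"] u' v' ba by (meson not_le order.strict_iff_not)
  then have adj: "adj GG u v \<longleftrightarrow> u \<in> As (idx u)" and "1 \<le> idx u" "1 \<le> a"
    using adj_GG_below[OF u'(2) v'(2)] u'(1) ba by auto
  from a show ?thesis
  proof (cases rule: block_cases)
    case (single i)
    then have "idx u = i"
      using idx_eq[OF single(1)] u by simp
    then show ?thesis
      using adj single(6) \<open>1 \<le> a\<close> by simp
  next
    case (run t)
    then show ?thesis
      using adj run_member_As[OF \<open>1 \<le> idx u\<close> u'(1) _ u'(2)] u u' \<open>1 \<le> a\<close> by simp
  qed
qed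

lemma Aut_G'_stable:
  assumes a: "1 \<le> a" "a \<le> l" and \<sigma>: "\<sigma> \<in> Aut (G' a)" and u: "u \<in> block a"
  shows "\<sigma> u \<in> A' a \<longleftrightarrow> u \<in> A' a"
  using a(2)
proof (cases rule: block_cases)
  case (single i)
  have i: "1 \<le> i"
    using single(2) a(1) f_0 by (cases i) auto
  have "\<sigma> ` As i = As i"
    using Aut_image_KS_clique[OF is_graph_Gs indecomposable_Gs comp_type_None KS_partition_Gs]
      i single \<sigma> by simp
  moreover have "inj_on \<sigma> (V i)"
    using Aut_bij[OF \<sigma>] single by (simp add: bij_betw_def)
  ultimately show ?thesis
    using inj_on_image_mem_iff[of \<sigma> "V i" u "As i"] As_subset[OF i single(1)] u single a(1)
    by simp
next
  case (run t)
  have "\<sigma> u \<in> block a"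
    using Aut_bij[OF \<sigma>] u verts_G'[OF a(2)] by (auto dest: bij_betwE)
  then show ?thesis
    using run(3) a(1) u by simp
qed

lemma prefix_eq_blocks: "prefix K = (\<Union>a\<le>l. block a)"
proof -
  have "f (idx x) \<le> l" if "x \<in> prefix K" for x
    using f_image mem_V_idx[OF that] by auto
  then show ?thesis
    unfolding block_def by auto
qed

sublocale layered_graph GG l G' A'
proof
  show "verts GG = (\<Union>a\<le>l. verts (G' a))"
    using verts_GG prefix_eq_blocks verts_G' by simp
  show "disjoint_family_on (\<lambda>a. verts (G' a)) {..l}"
    using verts_G' unfolding disjoint_family_on_def block_def by auto
qed (use verts_G' adj_within_block adj_across_blocks Aut_G'_stable in auto)

lemma Aut_mem_prefix_iff:
  assumes \<pi>: "\<pi> \<in> Aut GG" and j: "j < K" "\<not> joined j" and x: "x \<in> prefix K"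
  shows "\<pi> x \<in> prefix j \<longleftrightarrow> x \<in> prefix j"
proof -
  have "inj_on \<pi> (prefix K)"
    using Aut_bij[OF \<pi>] verts_GG by (simp add: bij_betw_def)
  then have "\<pi> x \<in> \<pi> ` prefix j \<longleftrightarrow> x \<in> prefix j"
    using inj_on_image_mem_iff x prefix_mono[of j K] j(1) by simp
  then show ?thesis
    using Aut_image_prefix[OF \<pi> j] by simp
qed

lemma Aut_preserves_block_of:
  assumes \<pi>: "\<pi> \<in> Aut GG" and x: "x \<in> prefix K"
  shows "f (idx (\<pi> x)) = f (idx x)"
proof (rule ccontr)
  assume neq: "f (idx (\<pi> x)) \<noteq> f (idx x)"
  have \<pi>x: "\<pi> x \<in> prefix K"
    using Aut_bij[OF \<pi>] x verts_GG by (auto dest: bij_betwE)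
  define lo hi where "lo = min (idx x) (idx (\<pi> x))" and "hi = max (idx x) (idx (\<pi> x))"
  have "hi \<le> K"
    using mem_V_idx x \<pi>x unfolding hi_def by simp
  moreover have "f lo \<noteq> f hi"
    using neq unfolding lo_def hi_def by (cases "idx x \<le> idx (\<pi> x)") (auto simp: min_def max_def)
  ultimately obtain j where j: "lo \<le> j" "j < hi" "\<not> joined j"
    using f_eq_iff_joined[of lo hi] unfolding lo_def hi_def by auto
  then have "\<pi> x \<in> prefix j \<longleftrightarrow> x \<in> prefix j"
    using Aut_mem_prefix_iff[OF \<pi> _ _ x] \<open>hi \<le> K\<close> by simp
  moreover have "x \<in> prefix j \<longleftrightarrow> idx x \<le> j" "\<pi> x \<in> prefix j \<longleftrightarrow> idx (\<pi> x) \<le> j"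
    using idx_le_iff x \<pi>x j(2) \<open>hi \<le> K\<close> by auto
  ultimately show False
    using j(1,2) unfolding lo_def hi_def by linarith
qed

lemma Aut_image_block:
  assumes \<pi>: "\<pi> \<in> Aut GG"
  shows "\<pi> ` block a = block a"
proof -
  have bij: "bij_betw \<pi> (prefix K) (prefix K)"
    using Aut_bij[OF \<pi>] verts_GG by simp
  have iff: "\<pi> x \<in> block a \<longleftrightarrow> x \<in> block a" if "x \<in> prefix K" for x
    using Aut_preserves_block_of[OF \<pi> that] bij_betwE[OF bij] that unfolding block_def by auto
  have sub: "block a \<subseteq> prefix K"
    unfolding block_def by blast
  show ?thesis
  proof
    show "\<pi> ` block a \<subseteq> block a"
      using iff sub by auto
    show "block a \<subseteq> \<pi> ` block a"
    proof
      fix y assume y: "y \<in> block a"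
      then have "y \<in> \<pi> ` prefix K"
        using bij sub unfolding bij_betw_def by auto
      then obtain x where "x \<in> prefix K" "y = \<pi> x"
        by blast
      then show "y \<in> \<pi> ` block a"
        using iff y by auto
    qed
  qed
qed

end

lemma canonical_components_if_canonical_decomp:
  "canonical_decomp G k Gs As Bs \<Longrightarrow> canonical_components k Gs As Bs"
  unfolding canonical_decomp_def canonical_components_def by auto

lemma compact_components_if_compact_of:
  assumes "canonical_decomp G k Gs As Bs" "compact_of k Gs As Bs l G' A' B'"
  obtains f where "compact_components k Gs As Bs l f G' A'"
proof -
  obtain f where
    f: "f 0 = 0" "mono_on {0..k} f" "f ` {0..k} = {0..l}"
      "\<forall>i<k. f i = f (Suc i) \<longleftrightarrow>
         comp_type k Gs As i \<noteq> None \<and> comp_type k Gs As i = comp_type k Gs As (Suc i)"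
    and None: "\<forall>i\<le>k. comp_type k Gs As i = None \<longrightarrow>
         G' (f i) = Gs i \<and> (1 \<le> f i \<longrightarrow> A' (f i) = As i \<and> B' (f i) = Bs i)"
    and Some: "\<forall>i\<le>k. let U = \<Union>{verts (Gs i') | i'. i' \<le> k \<and> f i' = f i} in
         (comp_type k Gs As i = Some TK1 \<longrightarrow>
            G' (f i) = complete_graph U \<and> (1 \<le> f i \<longrightarrow> A' (f i) = U \<and> B' (f i) = {})) \<and>
         (comp_type k Gs As i = Some TS1 \<longrightarrow>
            G' (f i) = edgeless_graph U \<and> (1 \<le> f i \<longrightarrow> A' (f i) = {} \<and> B' (f i) = U))"
    using assms(2) unfolding compact_of_def by blast
  have "compact_components k Gs As Bs l f G' A'"
  proof (intro compact_components.intro compact_components_axioms.intro)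
    show "canonical_components k Gs As Bs"
      using canonical_components_if_canonical_decomp[OF assms(1)] .
    show "G' (f i) = (if t = TK1 then complete_graph U else edgeless_graph U) \<and>
        (1 \<le> f i \<longrightarrow> A' (f i) = (if t = TK1 then U else {}))"
      if "i \<le> k" "comp_type k Gs As i = Some t"
        "U = \<Union>{verts (Gs i') | i'. i' \<le> k \<and> f i' = f i}" for i t U
      using Some that by (cases t) (auto simp: Let_def)
  qed (use f None in auto)
  then show ?thesis
    by (rule that)
qed

theorem mainTheorem6:
  fixes G :: "'a graph" and l :: nat
    and G' :: "nat \<Rightarrow> 'a graph" and A' B' :: "nat \<Rightarrow> 'a set"
  assumes "is_graph G"
    and "compact_canonical_decomp G l G' A' B'"
  shows "(\<forall>\<pi>\<in>Aut G. \<forall>i\<le>l. \<pi> ` verts (G' i) = verts (G' i))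
     \<and> (\<lambda>\<pi>. \<lambda>i\<in>{0..l}. perm_restrict \<pi> (verts (G' i)))
           \<in> iso (Aut_group G) (product_group {0..l} (\<lambda>i. Aut_group (G' i)))
     \<and> (\<forall>\<pi>s. (\<forall>i\<le>l. \<pi>s i \<in> Aut (G' i)) \<longrightarrow>
           (\<exists>\<pi>\<in>Aut G. \<forall>i\<le>l. \<forall>x\<in>verts (G' i). \<pi> x = \<pi>s i x))"
proof -
  obtain k Gs As Bs where canonical: "canonical_decomp G k Gs As Bs"
    and compact: "compact_of k Gs As Bs l G' A' B'"
    using assms(2) unfolding compact_canonical_decomp_def by blast
  obtain f where "compact_components k Gs As Bs l f G' A'"
    using compact_components_if_compact_of[OF canonical compact] .
  then interpret compact_components k Gs As Bs l f G' A' .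
  have G: "G = compose k Gs As Bs"
    using canonical unfolding canonical_decomp_def by simp
  have invariant: "\<pi> ` verts (G' i) = verts (G' i)" if "\<pi> \<in> Aut G" "i \<le> l" for \<pi> i
    using Aut_image_block that verts_G' G by simp
  show ?thesis
    using invariant perm_restrict_iso_product[OF invariant] exists_Aut_gluing G by blast
qed

end
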